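(* Let $\mathcal{X}=\{(\mathbf{x}^{(1,m)},\ldots,\mathbf{x}^{(N,m)})\in(\mathbb{R}^D)^N\}_{m=1}^M$ and let $\bar{\mathcal{K}}\subseteq[N]$ have even size. Then there exists a complete undirected weighted graph with vertex set $\bar{\mathcal{K}}$ and edge weights $w$ such that for every $\mathcal{K}\subset\bar{\mathcal{K}}$, the weight of the cut induced by $\mathcal{K}$, namely $\sum_{n\in\mathcal{K},\,n'\in\bar{\mathcal{K}}\setminus\mathcal{K}}w(\{n,n'\})$, equals $\frac12\big[\mathrm{SE}(\mathcal{X};\mathcal{K})+\mathrm{SE}(\mathcal{X};\bar{\mathcal{K}}\setminus\mathcal{K})\big]$ up to an additive constant independent of $\mathcal{K}$. In particular, the problem $\min_{\mathcal{K}\subset\bar{\mathcal{K}},\,|\mathcal{K}|=|\bar{\mathcal{K}}|/2}\frac12\big[\mathrm{SE}(\mathcal{X};\mathcal{K})+\mathrm{SE}(\mathcal{X};\bar{\mathcal{K}}\setminus\mathcal{K})\big]$ is a minimum balanced cut problem on this complete graph with $|\bar{\mathcal{K}}|$ vertices.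
   Context: $[N]=\{1,\ldots,N\}$. For the instance set $\mathcal{X}$, let $\mu^{(n)}=\frac1M\sum_m\mathbf{x}^{(n,m)}$, $\Sigma^{(n)}=\frac1M\sum_m(\mathbf{x}^{(n,m)}-\mu^{(n)})\otimes(\mathbf{x}^{(n,m)}-\mu^{(n)})$ and $\Sigma^{(n,n')}=\frac1M\sum_m(\mathbf{x}^{(n,m)}-\mu^{(n)})\otimes(\mathbf{x}^{(n',m)}-\mu^{(n')})$. The multivariate Pearson correlation of features $n,n'$ is $p_{n,n'}:=\mathrm{tr}(\Sigma^{(n,n')})/\mathrm{tr}\big((\Sigma^{(n)}\Sigma^{(n')})^{1/2}\big)$. For $\mathcal{K}\subseteq[N]$ the surrogate entanglement is $\mathrm{SE}(\mathcal{X};\mathcal{K}):=\sum_{n\in\mathcal{K},\,n'\in[N]\setminus\mathcal{K}}p_{n,n'}$. *)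

theory Defs
  imports "HOL-Analysis.Analysis"
begin

text \<open>Data set: x n m is the vector x^(n,m) in R^D (D = CARD('d)),
  for features n in [N] = {1..N} and samples m in {1..M}.\<close>

definition outer :: "real^'d \<Rightarrow> real^'d \<Rightarrow> real^'d^'d" where
  "outer a b = (\<chi> i j. a$i * b$j)"

definition feat_mean :: "nat \<Rightarrow> (nat \<Rightarrow> nat \<Rightarrow> real^'d) \<Rightarrow> nat \<Rightarrow> real^'d" where
  "feat_mean M x n = (1 / real M) *\<^sub>R (\<Sum>m=1..M. x n m)"

definition cross_cov :: "nat \<Rightarrow> (nat \<Rightarrow> nat \<Rightarrow> real^'d) \<Rightarrow> nat \<Rightarrow> nat \<Rightarrow> real^'d^'d" where
  "cross_cov M x n n' = (1 / real M) *\<^sub>R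
     (\<Sum>m=1..M. outer (x n m - feat_mean M x n) (x n' m - feat_mean M x n'))"

abbreviation cov :: "nat \<Rightarrow> (nat \<Rightarrow> nat \<Rightarrow> real^'d) \<Rightarrow> nat \<Rightarrow> real^'d^'d" where
  "cov M x n \<equiv> cross_cov M x n n"

text \<open>Principal matrix square root: a square root all of whose (complex) eigenvalues
  are nonnegative reals.\<close>
definition complexify :: "real^'d^'d \<Rightarrow> complex^'d^'d" where
  "complexify S = (\<chi> i j. complex_of_real (S$i$j))"

definition msqrt :: "real^'d^'d \<Rightarrow> real^'d^'d" where
  "msqrt A = (SOME S. S ** S = A \<and>
      (\<forall>c::complex. det (complexify S - mat c) = 0 \<longrightarrow> Im c = 0 \<and> Re c \<ge> 0))"

definition pearson :: "nat \<Rightarrow> (nat \<Rightarrow> nat \<Rightarrow> real^'d) \<Rightarrow> nat \<Rightarrow> nat \<Rightarrow> real" where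
  "pearson M x n n' = trace (cross_cov M x n n') / trace (msqrt (cov M x n ** cov M x n'))"

definition SE :: "nat \<Rightarrow> nat \<Rightarrow> (nat \<Rightarrow> nat \<Rightarrow> real^'d) \<Rightarrow> nat set \<Rightarrow> real" where
  "SE N M x K = (\<Sum>n\<in>K. \<Sum>n'\<in>{1..N} - K. pearson M x n n')"

definition cut_weight :: "(nat set \<Rightarrow> real) \<Rightarrow> nat set \<Rightarrow> nat set \<Rightarrow> real" where
  "cut_weight w V K = (\<Sum>n\<in>K. \<Sum>n'\<in>V - K. w {n, n'})"

end

theory Submission
  imports Defs
begin

text \<open>For a set K inside Kbar, SE(K) + SE(Kbar - K) counts every pearson value
  between K and Kbar - K in both directions, and every value from Kbar to the complement
  of Kbar exactly once, independently of K. The latter part is SE(Kbar), so the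
  symmetrised correlations (p(n,n') + p(n',n))/2 as edge weights give the cut weight
  (SE(K) + SE(Kbar - K) - SE(Kbar))/2.\<close>

text \<open>Only the values on doubletons, the edges of the complete graph, matter.\<close>
definition sym_weight :: "('a \<Rightarrow> 'a \<Rightarrow> real) \<Rightarrow> 'a set \<Rightarrow> real" where
  "sym_weight p S = (1/2) * (\<Sum>u\<in>S. \<Sum>v\<in>S - {u}. p u v)"

lemma sym_weight_doubleton:
  assumes "a \<noteq> b"
  shows "sym_weight p {a, b} = (p a b + p b a) / 2"
proof -
  have "{a, b} - {a} = {b}" "{a, b} - {b} = {a}" using assms by auto
  then show ?thesis using assms by (simp add: sym_weight_def)
qed

lemma cut_weight_sym_weight:
  "cut_weight (sym_weight p) V K = (\<Sum>n\<in>K. \<Sum>n'\<in>V - K. p n n' + p n' n) / 2"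
  unfolding cut_weight_def sum_divide_distrib
  by (intro sum.cong refl) (subst sym_weight_doubleton, auto)

lemma boundary_sums_split:
  fixes p :: "'a \<Rightarrow> 'a \<Rightarrow> 'b::comm_monoid_add"
  assumes "finite U" "V \<subseteq> U" "K \<subseteq> V"
  shows "(\<Sum>n\<in>K. \<Sum>n'\<in>U - K. p n n') + (\<Sum>n\<in>V - K. \<Sum>n'\<in>U - (V - K). p n n')
       = (\<Sum>n\<in>K. \<Sum>n'\<in>V - K. p n n' + p n' n) + (\<Sum>n\<in>V. \<Sum>n'\<in>U - V. p n n')"
proof -
  have fin: "finite K" "finite (V - K)" "finite (U - V)"
    using assms by (auto intro: finite_subset)
  have "(\<Sum>n\<in>K. \<Sum>n'\<in>U - K. p n n')
      = (\<Sum>n\<in>K. \<Sum>n'\<in>V - K. p n n') + (\<Sum>n\<in>K. \<Sum>n'\<in>U - V. p n n')"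
  proof -
    have "U - K = (V - K) \<union> (U - V)" using assms by auto
    then have "sum (p n) (U - K) = sum (p n) (V - K) + sum (p n) (U - V)" for n
      using sum.union_disjoint[OF fin(2,3)] by auto
    then show ?thesis by (simp add: sum.distrib)
  qed
  moreover have "(\<Sum>n\<in>V - K. \<Sum>n'\<in>U - (V - K). p n n')
      = (\<Sum>n\<in>V - K. \<Sum>n'\<in>K. p n n') + (\<Sum>n\<in>V - K. \<Sum>n'\<in>U - V. p n n')"
  proof -
    have "U - (V - K) = K \<union> (U - V)" using assms by auto
    then have "sum (p n) (U - (V - K)) = sum (p n) K + sum (p n) (U - V)" for n
      using sum.union_disjoint[OF fin(1,3)] assms(3) by auto
    then show ?thesis by (simp add: sum.distrib)
  qed
  moreover have "(\<Sum>n\<in>V. \<Sum>n'\<in>U - V. p n n')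
      = (\<Sum>n\<in>K. \<Sum>n'\<in>U - V. p n n') + (\<Sum>n\<in>V - K. \<Sum>n'\<in>U - V. p n n')"
  proof -
    have "K \<union> (V - K) = V" using assms by auto
    then show ?thesis using sum.union_disjoint[OF fin(1,2), of "\<lambda>n. \<Sum>n'\<in>U - V. p n n'"] by simp
  qed
  moreover have "(\<Sum>n\<in>V - K. \<Sum>n'\<in>K. p n n') = (\<Sum>n\<in>K. \<Sum>n'\<in>V - K. p n' n)"
    by (rule sum.swap)
  ultimately show ?thesis
    by (simp add: sum.distrib add_ac)
qed

lemma SE_add_SE_Diff:
  assumes "Kbar \<subseteq> {1..N}" "K \<subseteq> Kbar"
  shows "SE N M x K + SE N M x (Kbar - K)
       = 2 * cut_weight (sym_weight (pearson M x)) Kbar K + SE N M x Kbar"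
  using boundary_sums_split[OF _ assms, of "pearson M x"]
  by (simp add: SE_def cut_weight_sym_weight)

theorem proposition2:
  fixes N M :: nat and x :: "nat \<Rightarrow> nat \<Rightarrow> real^'d" and Kbar :: "nat set"
  assumes "Kbar \<subseteq> {1..N}" and "even (card Kbar)"
  shows "\<exists>(w :: nat set \<Rightarrow> real) (c :: real).
     (\<forall>K. K \<subseteq> Kbar \<longrightarrow>
        cut_weight w Kbar K = (1/2) * (SE N M x K + SE N M x (Kbar - K)) + c)
   \<and> (\<forall>K. K \<subseteq> Kbar \<and> 2 * card K = card Kbar \<longrightarrow>
        ((\<forall>K'. K' \<subseteq> Kbar \<and> 2 * card K' = card Kbar \<longrightarrow>
            (1/2) * (SE N M x K + SE N M x (Kbar - K)) \<le> (1/2) * (SE N M x K' + SE N M x (Kbar - K')))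
         \<longleftrightarrow>
         (\<forall>K'. K' \<subseteq> Kbar \<and> 2 * card K' = card Kbar \<longrightarrow>
            cut_weight w Kbar K \<le> cut_weight w Kbar K')))"
proof -
  let ?w = "sym_weight (pearson M x)" and ?c = "- SE N M x Kbar / 2"
  have cut: "cut_weight ?w Kbar K = (1/2) * (SE N M x K + SE N M x (Kbar - K)) + ?c"
    if "K \<subseteq> Kbar" for K
    using SE_add_SE_Diff[OF assms(1) that, of M x] by (simp add: field_simps)
  show ?thesis
    by (rule exI[of _ ?w], rule exI[of _ ?c]) (auto simp: cut)
qed

end
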